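(* Let $1\le k\le r$ and let $\mathscr{I}=[I_0,\dots,I_{k-1}]$ be an ideal of $\Omega_{H_{k-1}}$. Then (1) $[I_0,\dots,I_{k-1},L(I_{k-1})]$, where $L(I_{k-1})=(\mathrm{res}^k_{k-1})^{-1}(I_{k-1})$, is an ideal of $\Omega_{H_k}$, and it is the largest ideal $[I_0,\dots,I_{k-1},J]$ of $\Omega_{H_k}$ whose restriction to $H_{k-1}$ is $\mathscr I$; (2) $[I_0,\dots,I_{k-1},S(I_{k-1})]$, where $S(I_{k-1})$ is the ideal of $R_k$ generated by $\mathrm{ind}^k_{k-1}(I_{k-1})\cup\mathrm{jnd}^k_{k-1}(I_{k-1})$, is an ideal of $\Omega_{H_k}$, and it is the smallest ideal of $\Omega_{H_k}$ whose restriction to $H_{k-1}$ is $\mathscr I$.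
   Context: Fix a prime $p$ and an integer $r\ge0$. For $0\le k\le r$ let $R_k$ be the commutative ring which is free as a $\mathbb{Z}$-module with basis $X_{k,0},\dots,X_{k,k}$ and multiplication $X_{k,i}X_{k,j}=p^{k-\max(i,j)}X_{k,\min(i,j)}$; thus $X_{k,k}=1$, and an integer $n$ is identified with $nX_{k,k}$. For $0\le k\le\ell\le r$ define: the additive map $\mathrm{ind}^\ell_k:R_k\to R_\ell$, $X_{k,i}\mapsto X_{\ell,i}$; the ring homomorphism $\mathrm{res}^\ell_k:R_\ell\to R_k$, $\mathrm{res}^\ell_k(X_{\ell,i})=p^{\ell-k}X_{k,i}$ if $i\le k$ and $=p^{\ell-i}$ if $i\ge k$; and the multiplicative map $\mathrm{jnd}^\ell_k:R_k\to R_\ell$, $$\mathrm{jnd}^\ell_k\Big(\sum_{i=0}^k m_iX_{k,i}\Big)=m_kX_{\ell,\ell}+\sum_{k\le i<\ell}\frac{m_k^{p^{\ell-i}}-m_k^{p^{\ell-i-1}}}{p^{\ell-i}}X_{\ell,i}+\sum_{0\le i<k}\frac{(\sum_{s=i}^k m_sp^{k-s})^{p^{\ell-k}}-(\sum_{s=i+1}^k m_sp^{k-s})^{p^{\ell-k}}}{p^{\ell-i}}X_{\ell,i}$$ ($m_i\in\mathbb{Z}$). For $k=\ell$ these maps are the identity. These data form the Burnside Tambara functor on $\mathbb{Z}/p^r\mathbb{Z}$, and keeping only indices $\le n$ gives $\Omega_{H_n}$. An ideal of $\Omega_{H_n}$ is a sequence $[I_0,\dots,I_n]$ of ideals $I_k\subseteq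 R_k$ such that for every $1\le k\le n$: $\mathrm{ind}^k_{k-1}(I_{k-1})\subseteq I_k$, $\mathrm{res}^k_{k-1}(I_k)\subseteq I_{k-1}$, $\mathrm{jnd}^k_{k-1}(I_{k-1})\subseteq I_k$. Inclusion is componentwise; the restriction of $[I_0,\dots,I_n]$ to $H_i$ ($i\le n$) is $[I_0,\dots,I_i]$. *)

theory Defs
  imports "HOL-Computational_Algebra.Primes"
begin

text \<open>An element of R_k is represented by its coefficient vector
  m :: nat => int w.r.t. the basis X_{k,0},...,X_{k,k}; coefficients at indices > k are 0.\<close>

definition carR :: "nat \<Rightarrow> (nat \<Rightarrow> int) set" where
  "carR k = {m. \<forall>i>k. m i = 0}"

definition zeroR :: "nat \<Rightarrow> int" where
  "zeroR = (\<lambda>t. 0)"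

definition addR :: "(nat \<Rightarrow> int) \<Rightarrow> (nat \<Rightarrow> int) \<Rightarrow> nat \<Rightarrow> int" where
  "addR a b = (\<lambda>t. a t + b t)"

definition negR :: "(nat \<Rightarrow> int) \<Rightarrow> nat \<Rightarrow> int" where
  "negR a = (\<lambda>t. - a t)"

text \<open>Multiplication in R_k: X_{k,i} X_{k,j} = p^(k - max i j) X_{k, min i j}.\<close>
definition multR :: "nat \<Rightarrow> nat \<Rightarrow> (nat \<Rightarrow> int) \<Rightarrow> (nat \<Rightarrow> int) \<Rightarrow> nat \<Rightarrow> int" where
  "multR p k a b = (\<lambda>t. if t \<le> k then
      (\<Sum>i\<le>k. \<Sum>j\<le>k. if min i j = t then a i * b j * int p ^ (k - max i j) else 0)
    else 0)"

text \<open>ind^l_k : X_{k,i} \<mapsto> X_{l,i} (additive).\<close>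
definition indR :: "nat \<Rightarrow> (nat \<Rightarrow> int) \<Rightarrow> nat \<Rightarrow> int" where
  "indR k a = (\<lambda>t. if t \<le> k then a t else 0)"

text \<open>res^l_k(X_{l,i}) = p^(l-k) X_{k,i} if i \<le> k, and p^(l-i) (= p^(l-i) X_{k,k}) if i \<ge> k; extended additively.\<close>
definition resX :: "nat \<Rightarrow> nat \<Rightarrow> nat \<Rightarrow> nat \<Rightarrow> nat \<Rightarrow> int" where
  "resX p l k i = (\<lambda>t. if i \<le> k then (if t = i then int p ^ (l - k) else 0)
                       else (if t = k then int p ^ (l - i) else 0))"

definition resR :: "nat \<Rightarrow> nat \<Rightarrow> nat \<Rightarrow> (nat \<Rightarrow> int) \<Rightarrow> nat \<Rightarrow> int" where
  "resR p l k a = (\<lambda>t. \<Sum>i\<le>l. a i * resX p l k i t)"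

text \<open>jnd^l_k (multiplicative norm map); the divisions are exact.\<close>
definition jndR :: "nat \<Rightarrow> nat \<Rightarrow> nat \<Rightarrow> (nat \<Rightarrow> int) \<Rightarrow> nat \<Rightarrow> int" where
  "jndR p l k m = (\<lambda>t.
     if t = l then m k
     else if k \<le> t \<and> t < l then
       (m k ^ (p ^ (l - t)) - m k ^ (p ^ (l - t - 1))) div (int p ^ (l - t))
     else if t < k then
       ((\<Sum>s\<in>{t..k}. m s * int p ^ (k - s)) ^ (p ^ (l - k))
         - (\<Sum>s\<in>{t+1..k}. m s * int p ^ (k - s)) ^ (p ^ (l - k))) div (int p ^ (l - t))
     else 0)"

definition is_ideal_R :: "nat \<Rightarrow> nat \<Rightarrow> (nat \<Rightarrow> int) set \<Rightarrow> bool" where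
  "is_ideal_R p k I \<longleftrightarrow> I \<subseteq> carR k \<and> zeroR \<in> I \<and>
     (\<forall>a\<in>I. \<forall>b\<in>I. addR a b \<in> I) \<and> (\<forall>a\<in>I. negR a \<in> I) \<and>
     (\<forall>a\<in>I. \<forall>b\<in>carR k. multR p k b a \<in> I)"

definition ideal_gen_R :: "nat \<Rightarrow> nat \<Rightarrow> (nat \<Rightarrow> int) set \<Rightarrow> (nat \<Rightarrow> int) set" where
  "ideal_gen_R p k S = \<Inter>{J. is_ideal_R p k J \<and> S \<subseteq> J}"

text \<open>Ideals of Omega_{H_n}: sequences I_0,...,I_n (components beyond n are ignored).\<close>
definition is_ideal_Omega :: "nat \<Rightarrow> nat \<Rightarrow> (nat \<Rightarrow> (nat \<Rightarrow> int) set) \<Rightarrow> bool" where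
  "is_ideal_Omega p n I \<longleftrightarrow> (\<forall>k\<le>n. is_ideal_R p k (I k)) \<and>
     (\<forall>k. 1 \<le> k \<and> k \<le> n \<longrightarrow>
        indR (k - 1) ` I (k - 1) \<subseteq> I k \<and>
        resR p k (k - 1) ` I k \<subseteq> I (k - 1) \<and>
        jndR p k (k - 1) ` I (k - 1) \<subseteq> I k)"

definition L_ideal :: "nat \<Rightarrow> nat \<Rightarrow> (nat \<Rightarrow> int) set \<Rightarrow> (nat \<Rightarrow> int) set" where
  "L_ideal p k J = {a \<in> carR k. resR p k (k - 1) a \<in> J}"

definition S_ideal :: "nat \<Rightarrow> nat \<Rightarrow> (nat \<Rightarrow> int) set \<Rightarrow> (nat \<Rightarrow> int) set" where
  "S_ideal p k J = ideal_gen_R p k (indR (k - 1) ` J \<union> jndR p k (k - 1) ` J)"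

end

theory Submission
  imports Defs "HOL-Number_Theory.Number_Theory"
begin

text \<open>Write a \<in> R_h as \<Sum>_i m_i X_{h,i}. Its marks \<phi>_j(a) = \<Sum>_{s\<ge>j} m_s p^(h-s), j \<le> h,
  are ring homomorphisms R_h \<rightarrow> \<int> that jointly determine a. Under the marks, res^{h+1}_h
  becomes the identity, ind multiplication by p and jnd p-th powering; the divisions in jnd
  are exact because (x + y p^e)^p \<equiv> x^p mod p^(e+1). Hence res is a ring homomorphism with
  res (ind a) = p a and res (jnd a) = a^p, so L(I) = res\<inverse>(I) is an ideal containing the
  generators of S(I). Both therefore extend the given ideal, and any extension J satisfies
  S(I) \<subseteq> J \<subseteq> L(I) directly by the conditions on ind, jnd and res.\<close>

lemma int_prime_dvd_pow_self_diff:
  fixes m :: int assumes p: "prime p"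
  shows "int p dvd m ^ p - m"
proof -
  define r where "r = nat (m mod int p)"
  have p0: "p > 0" using p prime_gt_0_nat by blast
  have m_r: "[m = int r] (mod int p)" unfolding r_def using p0
    by (simp add: cong_def)
  have "[r ^ p = r] (mod p)"
  proof (cases "p dvd r")
    case True then show ?thesis
      by (metis cong_def dvd_imp_mod_0 p prime_gt_0_nat dvd_power dvd_trans dvd_refl mod_eq_0_iff_dvd)
  next
    case False
    from fermat_theorem[OF p False] have "[r ^ (p - 1) * r = 1 * r] (mod p)"
      by (rule cong_mult) simp
    moreover have "r ^ (p - 1) * r = r ^ p" using p0
      by (metis Suc_diff_1 power_Suc2)
    ultimately show ?thesis by simp
  qed
  then have "[int r ^ p = int r] (mod int p)"
    by (metis cong_int_iff of_nat_power)
  moreover have "[m ^ p = int r ^ p] (mod int p)" using m_r by (rule cong_pow)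
  ultimately have "[m ^ p = m] (mod int p)" using m_r
    by (meson cong_sym cong_trans)
  then show ?thesis by (simp add: cong_iff_dvd_diff)
qed

lemma prime_power_dvd_pow_diff:
  fixes x y :: int assumes p: "prime p" and e: "e \<ge> 1"
  shows "int p ^ (e + 1) dvd (x + y * int p ^ e) ^ p - x ^ p"
proof -
  define a where "a = x + y * int p ^ e"
  have factor: "a ^ p - x ^ p = (a - x) * (\<Sum>i<p. x ^ (p - Suc i) * a ^ i)"
    by (rule power_diff_sumr2)
  have "[a = x] (mod int p)"
    using e by (simp add: a_def cong_iff_dvd_diff dvd_power)
  then have "[(\<Sum>i<p. x ^ (p - Suc i) * a ^ i) = (\<Sum>i<p. x ^ (p - Suc i) * x ^ i)] (mod int p)"
    by (intro cong_sum cong_mult cong_refl cong_pow)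
  moreover have "(\<Sum>i<p. x ^ (p - Suc i) * x ^ i) = (\<Sum>i<p. x ^ (p - 1))"
    by (intro sum.cong refl) (simp add: power_add[symmetric])
  ultimately have "int p dvd (\<Sum>i<p. x ^ (p - Suc i) * a ^ i)"
    by (simp add: cong_def flip: cong_0_iff)
  moreover have "a - x = y * int p ^ e" by (simp add: a_def)
  ultimately have "int p ^ e * int p dvd (a - x) * (\<Sum>i<p. x ^ (p - Suc i) * a ^ i)"
    by (simp add: mult_dvd_mono)
  then show ?thesis using factor by (simp add: a_def mult.commute)
qed

definition mark :: "nat \<Rightarrow> nat \<Rightarrow> (nat \<Rightarrow> int) \<Rightarrow> nat \<Rightarrow> int" where
  "mark p h a j = (\<Sum>s=j..h. a s * int p ^ (h - s))"

lemma mark_eq_Suc: "j \<le> h \<Longrightarrow> mark p h a j = a j * int p ^ (h - j) + mark p h a (Suc j)"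
  unfolding mark_def by (simp add: sum.atLeast_Suc_atMost)

lemma mark_Suc_top [simp]: "mark p h a (Suc h) = 0"
  unfolding mark_def by simp

lemma carR_eq_if_marks_eq:
  assumes p: "p > 0" and a: "a \<in> carR h" and b: "b \<in> carR h"
    and marks: "\<And>j. j \<le> h \<Longrightarrow> mark p h a j = mark p h b j"
  shows "a = b"
proof
  fix t
  show "a t = b t"
  proof (cases "t \<le> h")
    case True
    have "mark p h a (Suc t) = mark p h b (Suc t)"
      using marks True by (cases "t = h") auto
    moreover have "mark p h a t = mark p h b t" using marks True by simp
    ultimately have "a t * int p ^ (h - t) = b t * int p ^ (h - t)"
      using mark_eq_Suc[OF True] by (metis add_right_cancel)
    then show ?thesis using p by simp
  next
    case False then show ?thesis using a b by (simp add: carR_def)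
  qed
qed

lemma mark_multR: "mark p h (multR p h a b) u = mark p h a u * mark p h b u"
proof -
  let ?m = "\<lambda>a i. if u \<le> i then a i * int p ^ (h - i) else 0"
  have mark_eq: "mark p h a u = (\<Sum>i\<le>h. ?m a i)" for a
    unfolding mark_def by (simp add: sum.If_cases) (intro sum.cong; auto)
  have "mark p h (multR p h a b) u =
     (\<Sum>t=u..h. \<Sum>i\<le>h. \<Sum>j\<le>h. if min i j = t then a i * b j * int p ^ (h - max i j) * int p ^ (h - min i j) else 0)"
    unfolding mark_def multR_def
    by (intro sum.cong refl) (auto simp: sum_distrib_right intro!: sum.cong)
  also have "\<dots> = (\<Sum>i\<le>h. \<Sum>j\<le>h. \<Sum>t=u..h. if min i j = t then a i * b j * int p ^ (h - max i j) * int p ^ (h - min i j) else 0)"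
    by (simp add: sum.swap[of _ "{u..h}"] sum.swap[of _ "{..h}" "{u..h}"])
  also have "\<dots> = (\<Sum>i\<le>h. \<Sum>j\<le>h. ?m a i * ?m b j)"
    by (intro sum.cong refl) (auto simp: sum.delta' max_def min_def mult_ac)
  also have "\<dots> = mark p h a u * mark p h b u"
    by (simp add: mark_eq sum_product)
  finally show ?thesis .
qed

lemma resR_Suc_eq: "resR p (Suc h) h a t =
   (if t < h then int p * a t else if t = h then int p * a h + a (Suc h) else 0)"
proof -
  have "resR p (Suc h) h a t = (\<Sum>i\<le>h. a i * resX p (Suc h) h i t) + a (Suc h) * resX p (Suc h) h (Suc h) t"
    unfolding resR_def by (simp add: atMost_Suc)
  also have "(\<Sum>i\<le>h. a i * resX p (Suc h) h i t) = (\<Sum>i\<le>h. if i = t then a t * int p else 0)"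
    by (intro sum.cong refl) (auto simp: resX_def)
  finally show ?thesis by (auto simp: resX_def sum.delta)
qed

lemma mark_resR: "j \<le> h \<Longrightarrow> mark p h (resR p (Suc h) h a) j = mark p (Suc h) a j"
proof (induction j rule: inc_induct)
  case base then show ?case by (simp add: mark_def resR_Suc_eq)
next
  case (step n) then show ?case by (simp add: mark_eq_Suc resR_Suc_eq Suc_diff_le)
qed

lemma mark_indR: "j \<le> h \<Longrightarrow> mark p (Suc h) (indR h a) j = int p * mark p h a j"
proof (induction j rule: inc_induct)
  case base then show ?case by (simp add: mark_def indR_def)
next
  case (step n) then show ?case by (simp add: mark_eq_Suc indR_def Suc_diff_le algebra_simps)
qed

lemma mark_jndR:
  assumes p: "prime p"
  shows "j \<le> h \<Longrightarrow> mark p (Suc h) (jndR p (Suc h) h m) j = mark p h m j ^ p"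
proof (induction j rule: inc_induct)
  case base
  have "mark p (Suc h) (jndR p (Suc h) h m) h = (m h ^ p - m h) div int p * int p + m h"
    by (simp add: mark_eq_Suc jndR_def)
  also have "\<dots> = m h ^ p" using int_prime_dvd_pow_self_diff[OF p] by simp
  finally show ?case by (simp add: mark_def)
next
  case (step n)
  have "mark p h m n = mark p h m (Suc n) + m n * int p ^ (h - n)"
    using step by (simp add: mark_eq_Suc)
  then have "int p ^ (Suc h - n) dvd mark p h m n ^ p - mark p h m (Suc n) ^ p"
    using prime_power_dvd_pow_diff[OF p, of "h - n" "mark p h m (Suc n)" "m n"] step
    by (simp add: Suc_diff_le)
  moreover have "jndR p (Suc h) h m n =
      (mark p h m n ^ p - mark p h m (Suc n) ^ p) div int p ^ (Suc h - n)"
    using step by (simp add: jndR_def mark_def)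
  ultimately show ?case using step by (simp add: mark_eq_Suc)
qed

definition constR :: "nat \<Rightarrow> int \<Rightarrow> nat \<Rightarrow> int" where
  "constR h c = (\<lambda>t. if t = h then c else 0)"

lemma mark_constR: "j \<le> h \<Longrightarrow> mark p h (constR h c) j = c"
proof (induction j rule: inc_induct)
  case base then show ?case by (simp add: mark_def constR_def)
next
  case (step n) then show ?case by (simp add: mark_eq_Suc[of n] constR_def)
qed

fun powR :: "nat \<Rightarrow> nat \<Rightarrow> (nat \<Rightarrow> int) \<Rightarrow> nat \<Rightarrow> nat \<Rightarrow> int" where
  "powR p h a 0 = constR h 1"
| "powR p h a (Suc n) = multR p h (powR p h a n) a"

lemma mark_powR: "j \<le> h \<Longrightarrow> mark p h (powR p h a n) j = mark p h a j ^ n"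
  by (induction n) (simp_all add: mark_constR mark_multR)

lemma multR_carR: "multR p h a b \<in> carR h"
  by (simp add: carR_def multR_def)

lemma resR_carR: "resR p (Suc h) h a \<in> carR h"
  by (simp add: carR_def resR_Suc_eq)

lemma resR_zeroR: "resR p (Suc h) h zeroR = zeroR"
  by (rule ext) (simp add: resR_Suc_eq zeroR_def)

lemma resR_addR: "resR p (Suc h) h (addR a b) = addR (resR p (Suc h) h a) (resR p (Suc h) h b)"
  by (rule ext) (simp add: resR_Suc_eq addR_def algebra_simps)

lemma resR_negR: "resR p (Suc h) h (negR a) = negR (resR p (Suc h) h a)"
  by (rule ext) (simp add: resR_Suc_eq negR_def)

lemma resR_multR:
  assumes "p > 0"
  shows "resR p (Suc h) h (multR p (Suc h) a b) = multR p h (resR p (Suc h) h a) (resR p (Suc h) h b)"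
  by (rule carR_eq_if_marks_eq[OF assms resR_carR multR_carR]) (simp add: mark_resR mark_multR)

lemma resR_indR:
  assumes "p > 0"
  shows "resR p (Suc h) h (indR h a) = multR p h (constR h (int p)) a"
  by (rule carR_eq_if_marks_eq[OF assms resR_carR multR_carR])
    (simp add: mark_resR mark_multR mark_indR mark_constR)

lemma resR_jndR:
  assumes p: "prime p"
  shows "resR p (Suc h) h (jndR p (Suc h) h a) = multR p h (powR p h a (p - 1)) a"
proof -
  have p0: "p > 0" using p prime_gt_0_nat by blast
  show ?thesis
    by (rule carR_eq_if_marks_eq[OF p0 resR_carR multR_carR])
      (simp add: mark_resR mark_multR mark_powR mark_jndR[OF p] power_Suc2[symmetric] p0)
qed

lemma is_ideal_R_carR: "is_ideal_R p k (carR k)"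
  by (simp add: is_ideal_R_def carR_def zeroR_def addR_def negR_def multR_def)

text \<open>Without the hypothesis no ideal contains G and the intersection is UNIV.\<close>
lemma is_ideal_R_ideal_gen_R:
  assumes "G \<subseteq> carR k"
  shows "is_ideal_R p k (ideal_gen_R p k G)"
proof -
  have mem: "x \<in> ideal_gen_R p k G \<longleftrightarrow> (\<forall>J. is_ideal_R p k J \<and> G \<subseteq> J \<longrightarrow> x \<in> J)" for x
    unfolding ideal_gen_R_def by blast
  show ?thesis
    unfolding is_ideal_R_def
  proof (intro conjI ballI subsetI)
    fix x assume "x \<in> ideal_gen_R p k G"
    then show "x \<in> carR k" using mem is_ideal_R_carR assms by blast
  next
    show "zeroR \<in> ideal_gen_R p k G" unfolding mem is_ideal_R_def by simp
  next
    fix a b assume "a \<in> ideal_gen_R p k G" "b \<in> ideal_gen_R p k G"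
    then show "addR a b \<in> ideal_gen_R p k G" unfolding mem is_ideal_R_def by simp
  next
    fix a assume "a \<in> ideal_gen_R p k G"
    then show "negR a \<in> ideal_gen_R p k G" unfolding mem is_ideal_R_def by simp
  next
    fix a b assume "a \<in> ideal_gen_R p k G" "b \<in> carR k"
    then show "multR p k b a \<in> ideal_gen_R p k G" unfolding mem is_ideal_R_def by simp
  qed
qed

lemma ideal_gen_R_subset: "is_ideal_R p k J \<Longrightarrow> G \<subseteq> J \<Longrightarrow> ideal_gen_R p k G \<subseteq> J"
  unfolding ideal_gen_R_def by blast

lemma subset_ideal_gen_R: "G \<subseteq> ideal_gen_R p k G"
  unfolding ideal_gen_R_def by blast

lemma is_ideal_R_L_ideal:
  assumes p0: "p > 0" and J: "is_ideal_R p h J"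
  shows "is_ideal_R p (Suc h) (L_ideal p (Suc h) J)"
proof -
  have "zeroR \<in> carR (Suc h)"
    by (simp add: carR_def zeroR_def)
  moreover have "negR a \<in> carR (Suc h)" "addR a b \<in> carR (Suc h)"
    if "a \<in> carR (Suc h)" "b \<in> carR (Suc h)" for a b
    using that by (simp_all add: carR_def negR_def addR_def)
  ultimately show ?thesis
    using J resR_carR[of p h]
    unfolding is_ideal_R_def L_ideal_def
    by (auto simp: resR_zeroR resR_addR resR_negR resR_multR[OF p0] multR_carR)
qed

lemma indR_image_subset_L_ideal:
  assumes "p > 0" and "is_ideal_R p h J"
  shows "indR h ` J \<subseteq> L_ideal p (Suc h) J"
proof -
  have "indR h a \<in> carR (Suc h)" for a
    by (simp add: carR_def indR_def)
  moreover have "constR h (int p) \<in> carR h"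
    by (simp add: carR_def constR_def)
  ultimately show ?thesis
    using assms by (auto simp: L_ideal_def is_ideal_R_def resR_indR)
qed

lemma jndR_image_subset_L_ideal:
  assumes "prime p" and "is_ideal_R p h J"
  shows "jndR p (Suc h) h ` J \<subseteq> L_ideal p (Suc h) J"
proof -
  have "jndR p (Suc h) h a \<in> carR (Suc h)" for a
    by (simp add: carR_def jndR_def)
  moreover have "powR p h a n \<in> carR h" for a n
    by (cases n) (simp add: carR_def constR_def, simp add: multR_carR)
  ultimately show ?thesis
    using assms by (auto simp: L_ideal_def is_ideal_R_def resR_jndR)
qed

lemma S_ideal_subset_L_ideal:
  assumes "prime p" and "is_ideal_R p h J"
  shows "S_ideal p (Suc h) J \<subseteq> L_ideal p (Suc h) J"
  unfolding S_ideal_def using assms prime_gt_0_nat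
  by (simp add: ideal_gen_R_subset is_ideal_R_L_ideal indR_image_subset_L_ideal
      jndR_image_subset_L_ideal)

lemma is_ideal_R_S_ideal:
  assumes p: "prime p" and J: "is_ideal_R p h J"
  shows "is_ideal_R p (Suc h) (S_ideal p (Suc h) J)"
proof -
  have "indR h ` J \<union> jndR p (Suc h) h ` J \<subseteq> L_ideal p (Suc h) J"
    using indR_image_subset_L_ideal[OF prime_gt_0_nat[OF p] J] jndR_image_subset_L_ideal[OF p J]
    by (rule Un_least)
  then have "indR h ` J \<union> jndR p (Suc h) h ` J \<subseteq> carR (Suc h)"
    unfolding L_ideal_def by blast
  then show ?thesis
    unfolding S_ideal_def diff_Suc_1 by (rule is_ideal_R_ideal_gen_R)
qed

lemma is_ideal_Omega_cong:
  assumes "\<And>i. i \<le> n \<Longrightarrow> J i = I i"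
  shows "is_ideal_Omega p n J \<longleftrightarrow> is_ideal_Omega p n I"
  using assms unfolding is_ideal_Omega_def by (smt (verit) diff_le_self le_trans)

lemma is_ideal_Omega_Suc_iff:
  "is_ideal_Omega p (Suc h) J \<longleftrightarrow> is_ideal_Omega p h J \<and> is_ideal_R p (Suc h) (J (Suc h)) \<and>
     indR h ` J h \<subseteq> J (Suc h) \<and> resR p (Suc h) h ` J (Suc h) \<subseteq> J h \<and>
     jndR p (Suc h) h ` J h \<subseteq> J (Suc h)"
proof -
  have A: "(\<forall>k\<le>Suc h. P k) \<longleftrightarrow> (\<forall>k\<le>h. P k) \<and> P (Suc h)"
    and B: "(\<forall>k. 1 \<le> k \<and> k \<le> Suc h \<longrightarrow> P k) \<longleftrightarrow> (\<forall>k. 1 \<le> k \<and> k \<le> h \<longrightarrow> P k) \<and> P (Suc h)"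
    for P :: "nat \<Rightarrow> bool"
    by (auto simp: le_Suc_eq)
  show ?thesis
    unfolding is_ideal_Omega_def A[of "\<lambda>k. is_ideal_R p k (J k)"]
      B[of "\<lambda>k. indR (k - 1) ` J (k - 1) \<subseteq> J k \<and>
        resR p k (k - 1) ` J k \<subseteq> J (k - 1) \<and> jndR p k (k - 1) ` J (k - 1) \<subseteq> J k"]
    by (simp only: diff_Suc_1) auto
qed

lemma is_ideal_Omega_extension_iff:
  assumes "is_ideal_Omega p h I" and "\<forall>i<Suc h. J i = I i"
  shows "is_ideal_Omega p (Suc h) J \<longleftrightarrow> is_ideal_R p (Suc h) (J (Suc h)) \<and>
     indR h ` I h \<subseteq> J (Suc h) \<and> resR p (Suc h) h ` J (Suc h) \<subseteq> I h \<and>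
     jndR p (Suc h) h ` I h \<subseteq> J (Suc h)"
  using assms is_ideal_Omega_cong[of h J I p] by (simp add: is_ideal_Omega_Suc_iff)

lemma is_ideal_Omega_fun_upd_iff:
  assumes "is_ideal_Omega p h I"
  shows "is_ideal_Omega p (Suc h) (I(Suc h := X)) \<longleftrightarrow> is_ideal_R p (Suc h) X \<and>
     indR h ` I h \<subseteq> X \<and> resR p (Suc h) h ` X \<subseteq> I h \<and> jndR p (Suc h) h ` I h \<subseteq> X"
proof -
  have "\<forall>i<Suc h. (I(Suc h := X)) i = I i" by simp
  from is_ideal_Omega_extension_iff[OF assms this] show ?thesis
    by (simp only: fun_upd_same)
qed

lemma is_ideal_Omega_fun_upd_L_ideal:
  assumes p: "prime p" and I: "is_ideal_Omega p h I"
  shows "is_ideal_Omega p (Suc h) (I(Suc h := L_ideal p (Suc h) (I h)))"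
proof -
  have "is_ideal_R p h (I h)" using I by (simp add: is_ideal_Omega_def)
  moreover have "resR p (Suc h) h ` L_ideal p (Suc h) (I h) \<subseteq> I h"
    by (auto simp: L_ideal_def)
  ultimately show ?thesis
    using p prime_gt_0_nat is_ideal_R_L_ideal indR_image_subset_L_ideal jndR_image_subset_L_ideal
    by (simp add: is_ideal_Omega_fun_upd_iff[OF I])
qed

lemma is_ideal_Omega_fun_upd_S_ideal:
  assumes p: "prime p" and I: "is_ideal_Omega p h I"
  shows "is_ideal_Omega p (Suc h) (I(Suc h := S_ideal p (Suc h) (I h)))"
proof -
  have Ih: "is_ideal_R p h (I h)" using I by (simp add: is_ideal_Omega_def)
  have "indR h ` I h \<union> jndR p (Suc h) h ` I h \<subseteq> S_ideal p (Suc h) (I h)"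
    unfolding S_ideal_def diff_Suc_1 by (rule subset_ideal_gen_R)
  moreover have "resR p (Suc h) h ` S_ideal p (Suc h) (I h) \<subseteq> I h"
    using S_ideal_subset_L_ideal[OF p Ih] by (auto simp: L_ideal_def)
  ultimately show ?thesis
    using is_ideal_R_S_ideal[OF p Ih] by (simp add: is_ideal_Omega_fun_upd_iff[OF I])
qed

lemma extension_between_S_ideal_L_ideal:
  assumes I: "is_ideal_Omega p h I" and J: "is_ideal_Omega p (Suc h) J"
    and agree: "\<forall>i<Suc h. J i = I i"
  shows "S_ideal p (Suc h) (I h) \<subseteq> J (Suc h) \<and> J (Suc h) \<subseteq> L_ideal p (Suc h) (I h)"
proof -
  have Jk: "is_ideal_R p (Suc h) (J (Suc h))" "indR h ` I h \<subseteq> J (Suc h)"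
    "resR p (Suc h) h ` J (Suc h) \<subseteq> I h" "jndR p (Suc h) h ` I h \<subseteq> J (Suc h)"
    using is_ideal_Omega_extension_iff[OF I agree] J by simp_all
  then have "S_ideal p (Suc h) (I h) \<subseteq> J (Suc h)"
    unfolding S_ideal_def by (simp add: ideal_gen_R_subset)
  moreover have "J (Suc h) \<subseteq> carR (Suc h)"
    using Jk(1) unfolding is_ideal_R_def by blast
  ultimately show ?thesis using Jk(3) by (auto simp: L_ideal_def)
qed

theorem proposition3:
  fixes p r k :: nat and I :: "nat \<Rightarrow> (nat \<Rightarrow> int) set"
  assumes "prime p" and "1 \<le> k" and "k \<le> r"
    and "is_ideal_Omega p (k - 1) I"
  shows "(is_ideal_Omega p k (I(k := L_ideal p k (I (k - 1)))) \<and>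
          (\<forall>J. is_ideal_Omega p k J \<and> (\<forall>i<k. J i = I i) \<longrightarrow>
               J k \<subseteq> L_ideal p k (I (k - 1))))
       \<and> (is_ideal_Omega p k (I(k := S_ideal p k (I (k - 1)))) \<and>
          (\<forall>J. is_ideal_Omega p k J \<and> (\<forall>i<k. J i = I i) \<longrightarrow>
               S_ideal p k (I (k - 1)) \<subseteq> J k))"
proof -
  obtain h where k: "k = Suc h" using assms(2) by (cases k) auto
  have I: "is_ideal_Omega p h I" using assms(4) k by simp
  show ?thesis
    unfolding k diff_Suc_1
    using is_ideal_Omega_fun_upd_L_ideal[OF assms(1) I] is_ideal_Omega_fun_upd_S_ideal[OF assms(1) I]
      extension_between_S_ideal_L_ideal[OF I]
    by blast
qed

end
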